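(* Let $a\geq5$. The function $F\colon[0,+\infty)\times[0,+\infty)\to[0,+\infty)\times[0,+\infty)$ defined by $$F(z,w)=\left(\frac{z+w}{1+z+w},\ \frac{z\bigl(a(1+z)+(a+3)w\bigr)}{(1+z+w)^2}\right)$$ is injective. *)

theory Defs
  imports Complex_Main
begin

definition F_map :: "real \<Rightarrow> real \<times> real \<Rightarrow> real \<times> real" where
  "F_map a = (\<lambda>(z, w). ((z + w) / (1 + z + w),
                         z * (a * (1 + z) + (a + 3) * w) / (1 + z + w)^2))"

end

theory Submission
  imports Defs
begin

text \<open>With \<open>s = z + w\<close> the first coordinate of \<open>F_map a (z, w)\<close> is \<open>s / (1 + s)\<close>, which is
  strictly increasing in \<open>s\<close>, so it determines \<open>s\<close>. On the segment \<open>z + w = s\<close> the numerator of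
  the second coordinate becomes \<open>z (a + (a + 3) s - 3 z)\<close>, a concave quadratic in \<open>z\<close> whose vertex
  \<open>(a + (a + 3) s) / 6\<close> lies beyond \<open>s\<close> as soon as \<open>a \<ge> 3\<close>; hence it is strictly increasing on
  \<open>[0, s]\<close> and determines \<open>z\<close>. In particular the bound \<open>a \<ge> 5\<close> is more than needed.\<close>

lemma F_map_sum_coordinates:
  "F_map a (z, w) =
     ((z + w) / (1 + (z + w)), z * (a + (a + 3) * (z + w) - 3 * z) / (1 + (z + w))^2)"
  by (simp add: F_map_def algebra_simps)

lemma strict_mono_on_divide_one_plus: "strict_mono_on {-1<..} (\<lambda>s::real. s / (1 + s))"
proof (rule strict_mono_onI)
  fix s t :: real
  assume "s \<in> {-1<..}" "t \<in> {-1<..}" "s < t"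
  then show "s / (1 + s) < t / (1 + t)"
    by (simp add: divide_simps algebra_simps)
qed

lemma strict_mono_on_segment_numerator:
  fixes a s :: real
  assumes "a \<ge> 3" "s \<ge> 0"
  shows "strict_mono_on {0..s} (\<lambda>z. z * (a + (a + 3) * s - 3 * z))"
proof (rule strict_mono_onI)
  fix y z
  assume "y \<in> {0..s}" "z \<in> {0..s}" "y < z"
  have "3 * s \<le> a * s"
    using assms by (simp add: mult_right_mono)
  with \<open>y \<in> {0..s}\<close> \<open>z \<in> {0..s}\<close> \<open>a \<ge> 3\<close>
  have "a + (a + 3) * s - 3 * (y + z) > 0"
    by (auto simp: distrib_right)
  with \<open>y < z\<close> have "(z - y) * (a + (a + 3) * s - 3 * (y + z)) > 0"
    by simp
  then show "y * (a + (a + 3) * s - 3 * y) < z * (a + (a + 3) * s - 3 * z)"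
    by (simp add: algebra_simps)
qed

lemma inj_on_F_map:
  fixes a :: real
  assumes "a \<ge> 3"
  shows "inj_on (F_map a) ({0..} \<times> {0..})"
proof (rule inj_onI, clarsimp)
  fix z1 w1 z2 w2 :: real
  assume nonneg: "z1 \<ge> 0" "w1 \<ge> 0" "z2 \<ge> 0" "w2 \<ge> 0"
    and eq: "F_map a (z1, w1) = F_map a (z2, w2)"
  define s where "s = z1 + w1"
  have "s = z2 + w2"
  proof (rule strict_mono_on_imp_inj_on[OF strict_mono_on_divide_one_plus, THEN inj_onD])
    show "s / (1 + s) = (z2 + w2) / (1 + (z2 + w2))"
      using eq by (simp add: F_map_sum_coordinates s_def)
  qed (use nonneg s_def in auto)
  then have "z1 * (a + (a + 3) * s - 3 * z1) / (1 + s)^2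
           = z2 * (a + (a + 3) * s - 3 * z2) / (1 + s)^2"
    using eq by (simp add: F_map_sum_coordinates s_def)
  moreover have "(1 + s)^2 > 0"
    using nonneg s_def by simp
  ultimately have "z1 * (a + (a + 3) * s - 3 * z1) = z2 * (a + (a + 3) * s - 3 * z2)"
    by simp
  moreover have "s \<ge> 0" "z1 \<in> {0..s}" "z2 \<in> {0..s}"
    using nonneg \<open>s = z2 + w2\<close> s_def by auto
  ultimately have "z1 = z2"
    using strict_mono_on_imp_inj_on[OF strict_mono_on_segment_numerator[OF assms]]
    by (meson inj_onD)
  then show "z1 = z2 \<and> w1 = w2"
    using \<open>s = z2 + w2\<close> s_def by simp
qed

theorem lemma4p5:
  fixes a :: real
  assumes "a \<ge> 5"
  shows "inj_on (F_map a) ({0..} \<times> {0..})"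
  using assms by (simp add: inj_on_F_map)

end
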